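(* For all $r\ge0$ and $2\le n\le\infty$, a morphism $f\colon A\to B$ of $n$-multicomplexes has the right lifting property with respect to every morphism in $I^n_r$ if and only if $f$ is an $E_r$-quasi-isomorphism and $f$ has the right lifting property with respect to every morphism in $J^n_0\cup J^n_r$. In other words, $I^n_r\text{-inj}=\mathcal E^n_r\cap J^n_0\text{-inj}\cap J^n_r\text{-inj}$.
   Context: Throughout, $R$ is a commutative unital ring. For $1\le n\le\infty$, an $n$-multicomplex is a $\mathbb Z\times\mathbb Z$-bigraded $R$-module $A=\{A^{p,q}\}$ with $R$-linear maps $d_i\colon A\to A$ ($i\ge0$) of bidegree $(-i,1-i)$ such that $\sum_{i+j=l}(-1)^id_id_j=0$ for all $l\ge0$, and $d_i=0$ for all $i\ge n$. Morphisms are bidegree $(0,0)$ maps commuting with all $d_i$; category $\mathrm{Ch}_n$. For a set $S$ of morphisms, $S$-inj is the class of morphisms with the right lifting property with respect to all of $S$. Spectral sequence: $Z_0^{p,q}(A)=A^{p,q}$; for $r\ge1$, $Z_r^{p,q}(A)$ is the set of $a_0\in A^{p,q}$ for which there exist $a_j\in A^{p-j,q-j}$ ($1\le j\le r-1$) with $\sum_{i+j=l}(-1)^id_ia_j=0$ for $0\le l\le r-1$. $B_0=0$, $B_1^{p,q}(A)=A^{p,q}\cap\operatorname{im}d_0$, and for $r\ge2$, $B_r^{p,q}(A)$ is the set of $x\in A^{p,q}$ for which there exist $b_i\in A^{p+r-1-i,q+r-2-i}$ ($0\le i\le r-1$) with $x=\sum_{i=0}^{r-1}(-1)^id_ib_{r-1-i}$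 and $\sum_{i=0}^l(-1)^id_ib_{l-i}=0$ for $0\le l\le r-2$. $E_r^{p,q}(A)=Z_r^{p,q}(A)/B_r^{p,q}(A)$, the spectral sequence of the column-filtered total complex. A morphism $f$ is an $E_r$-quasi-isomorphism if $E_{r+1}(f)$ is an isomorphism; $\mathcal E^n_r$ denotes the class of these in $\mathrm{Ch}_n$. Representing objects: $\mathbb D^n(p,q)$ is the free $n$-multicomplex on one generator in bidegree $(p,q)$. $\mathcal ZW^n_0(p,q)=\mathbb D^n(p,q)$ with generator $a_0$. $\mathcal ZW^n_1(p,q)$ is the pushout in $\mathrm{Ch}_n$ of $0\leftarrow\mathbb D^n(p,q+1)\to\mathbb D^n(p,q)$, the right map sending the generator to $d_0a_0$. For $r\ge2$, $\mathcal ZW^n_r(p,q)$ is the pushout in $\mathrm{Ch}_n$ of $\mathcal ZW^n_{r-1}(p,q)\leftarrow\mathbb D^n(p-r+1,q-r+2)\to\mathbb D^n(p-r+1,q-r+1)$, where, writing $x$ for the generator of the middle object and $a_{r-1}$ for that of the right one, the left map sends $x\mapsto\sum_{i=1}^{r-1}(-1)^{i+1}d_ia_{r-1-i}$ and the right map sends $x\mapsto d_0a_{r-1}$; images of $a_0,\dots,a_{r-1}$ keep their names ($a_i$ in bidegree $(p-i,q-i)$). $\mathcal BW^n_0(p,q-1)=0$, $\mathcal BW^n_1(p,q-1)=\mathbb D^n(p,q-1)$, and for $r\ge2$, $\mathcal BW^n_r(p,q-1)=\mathcal ZW^n_{r-1}(p+r-1,q+r-2)\oplus\mathbb D^n(p,q-1)\oplus\mathcal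 ZW^n_{r-1}(p-1,q-1)$. The morphism $\iota_r\colon\mathcal ZW^n_r(p,q)\to\mathcal BW^n_r(p,q-1)$: $\iota_0=0$; $\iota_1(a_0)=d_0e$ where $e$ generates $\mathbb D^n(p,q-1)$; for $r\ge2$, writing $b_0,\dots,b_{r-2}$, $e$, $c_0,\dots,c_{r-2}$ for the generators of the three summands, $\iota_r(a_j)=d_je+(-1)^j\sum_{i=j+1}^{r+j-1}(-1)^id_ib_{r+j-1-i}+c_{j-1}$ ($0\le j\le r-1$, $c_{-1}:=0$). Generating sets: $I^n_r=\{\iota_{r+1}\colon\mathcal ZW^n_{r+1}(p,q)\to\mathcal BW^n_{r+1}(p,q-1)\}_{p,q\in\mathbb Z}$ and $J^n_r=\{0\to\mathcal ZW^n_r(p,q)\}_{p,q\in\mathbb Z}$. *)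

theory Defs
  imports Main "HOL-Library.Extended_Nat"
begin

text \<open>A bigraded R-module is given by its homogeneous components comp A p q,
  each a submodule of an ambient abelian group, with scalar action sc A.  Only homogeneous data is ever used.\<close>

record ('r, 'a) mcx =
  comp :: "int \<Rightarrow> int \<Rightarrow> 'a set"
  sc   :: "'r \<Rightarrow> 'a \<Rightarrow> 'a"
  dd   :: "nat \<Rightarrow> 'a \<Rightarrow> 'a"

definition sg :: "nat \<Rightarrow> 'a::ab_group_add \<Rightarrow> 'a" where
  "sg i x = (if even i then x else - x)"

definition is_mc :: "enat \<Rightarrow> ('r::comm_ring_1, 'a::ab_group_add) mcx \<Rightarrow> bool" where
  "is_mc n A \<longleftrightarrow>
     (\<forall>p q. 0 \<in> comp A p q
        \<and> (\<forall>x\<in>comp A p q. \<forall>y\<in>comp A p q. x + y \<in> comp A p q)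
        \<and> (\<forall>x\<in>comp A p q. - x \<in> comp A p q)
        \<and> (\<forall>c. \<forall>x\<in>comp A p q. sc A c x \<in> comp A p q)
        \<and> (\<forall>c. \<forall>x\<in>comp A p q. \<forall>y\<in>comp A p q. sc A c (x + y) = sc A c x + sc A c y)
        \<and> (\<forall>c c'. \<forall>x\<in>comp A p q. sc A (c + c') x = sc A c x + sc A c' x)
        \<and> (\<forall>c c'. \<forall>x\<in>comp A p q. sc A (c * c') x = sc A c (sc A c' x))
        \<and> (\<forall>x\<in>comp A p q. sc A 1 x = x)
        \<and> (\<forall>i. \<forall>x\<in>comp A p q. dd A i x \<in> comp A (p - int i) (q + 1 - int i))
        \<and> (\<forall>i. \<forall>x\<in>comp A p q. \<forall>y\<in>comp A p q. dd A i (x + y) = dd A i x + dd A i y)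
        \<and> (\<forall>i c. \<forall>x\<in>comp A p q. dd A i (sc A c x) = sc A c (dd A i x))
        \<and> (\<forall>l. \<forall>x\<in>comp A p q. (\<Sum>i\<le>l. sg i (dd A i (dd A (l - i) x))) = 0)
        \<and> (\<forall>i. n \<le> enat i \<longrightarrow> (\<forall>x\<in>comp A p q. dd A i x = 0)))"

definition mc_hom :: "('r::comm_ring_1, 'a::ab_group_add) mcx \<Rightarrow> ('r, 'b::ab_group_add) mcx
    \<Rightarrow> ('a \<Rightarrow> 'b) \<Rightarrow> bool" where
  "mc_hom A B f \<longleftrightarrow>
     (\<forall>p q. \<forall>x\<in>comp A p q. f x \<in> comp B p q
        \<and> (\<forall>y\<in>comp A p q. f (x + y) = f x + f y)
        \<and> (\<forall>c. f (sc A c x) = sc B c (f x))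
        \<and> (\<forall>i. f (dd A i x) = dd B i (f x)))"

definition Zset :: "('r::comm_ring_1, 'a::ab_group_add) mcx \<Rightarrow> nat \<Rightarrow> int \<Rightarrow> int \<Rightarrow> 'a set" where
  "Zset A r p q = {a0. a0 \<in> comp A p q \<and>
     (\<exists>a :: nat \<Rightarrow> 'a. a 0 = a0
        \<and> (\<forall>j. 1 \<le> j \<and> j < r \<longrightarrow> a j \<in> comp A (p - int j) (q - int j))
        \<and> (\<forall>l<r. (\<Sum>i\<le>l. sg i (dd A i (a (l - i)))) = 0))}"

text \<open>For r = 0 this gives 0, for r = 1 it gives A^{p,q} \<inter> im d_0, and for r \<ge> 2 the
  set from the paper.\<close>
definition Bset :: "('r::comm_ring_1, 'a::ab_group_add) mcx \<Rightarrow> nat \<Rightarrow> int \<Rightarrow> int \<Rightarrow> 'a set" where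
  "Bset A r p q = {x. \<exists>b :: nat \<Rightarrow> 'a.
        (\<forall>i<r. b i \<in> comp A (p + int r - 1 - int i) (q + int r - 2 - int i))
      \<and> x = (\<Sum>i<r. sg i (dd A i (b (r - 1 - i))))
      \<and> (\<forall>l. l + 2 \<le> r \<longrightarrow> (\<Sum>i\<le>l. sg i (dd A i (b (l - i)))) = 0)}"

definition coset_of :: "('r::comm_ring_1, 'a::ab_group_add) mcx \<Rightarrow> nat \<Rightarrow> int \<Rightarrow> int \<Rightarrow> 'a \<Rightarrow> 'a set" where
  "coset_of A r p q z = {z + b | b. b \<in> Bset A r p q}"

definition Eset :: "('r::comm_ring_1, 'a::ab_group_add) mcx \<Rightarrow> nat \<Rightarrow> int \<Rightarrow> int \<Rightarrow> 'a set set" where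
  "Eset A r p q = coset_of A r p q ` Zset A r p q"

definition Emap :: "('r::comm_ring_1, 'a::ab_group_add) mcx \<Rightarrow> ('r, 'b::ab_group_add) mcx
    \<Rightarrow> ('a \<Rightarrow> 'b) \<Rightarrow> nat \<Rightarrow> int \<Rightarrow> int \<Rightarrow> 'a set \<Rightarrow> 'b set" where
  "Emap A B f r p q X = coset_of B r p q
     (f (SOME z. z \<in> Zset A r p q \<and> X = coset_of A r p q z))"

text \<open>f is an E_r-quasi-isomorphism iff E_{r+1}(f) is an isomorphism (in every bidegree).\<close>
definition E_qiso :: "('r::comm_ring_1, 'a::ab_group_add) mcx \<Rightarrow> ('r, 'b::ab_group_add) mcx
    \<Rightarrow> ('a \<Rightarrow> 'b) \<Rightarrow> nat \<Rightarrow> bool" where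
  "E_qiso A B f r \<longleftrightarrow>
     (\<forall>p q. bij_betw (Emap A B f (Suc r) p q) (Eset A (Suc r) p q) (Eset B (Suc r) p q))"

text \<open>A formal expression in the free multicomplex on generators of type 'g:
  an R-linear combination of words d_{i1} ... d_{ik} g.\<close>
type_synonym ('r, 'g) fexpr = "('r \<times> nat list \<times> 'g) list"

record ('r, 'g) pres =
  gens :: "'g set"
  gdeg :: "'g \<Rightarrow> int \<times> int"
  rels :: "('r, 'g) fexpr set"

fun dw :: "('r, 'a) mcx \<Rightarrow> nat list \<Rightarrow> 'a \<Rightarrow> 'a" where
  "dw A [] x = x"
| "dw A (i # w) x = dd A i (dw A w x)"

definition evalx :: "('r::comm_ring_1, 'a::ab_group_add) mcx \<Rightarrow> ('g \<Rightarrow> 'a) \<Rightarrow> ('r, 'g) fexpr \<Rightarrow> 'a" where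
  "evalx A \<alpha> e = sum_list (map (\<lambda>(c, w, g). sc A c (dw A w (\<alpha> g))) e)"

text \<open>Morphisms from the presented n-multicomplex P into A, described by the images of
  the generators (a presented object is the free n-multicomplex on its generators modulo
  the sub-multicomplex generated by its relations).\<close>
definition Hom :: "('r::comm_ring_1, 'g) pres \<Rightarrow> ('r, 'a::ab_group_add) mcx \<Rightarrow> ('g \<Rightarrow> 'a) set" where
  "Hom P A = {\<alpha>. (\<forall>g\<in>gens P. \<alpha> g \<in> comp A (fst (gdeg P g)) (snd (gdeg P g)))
                 \<and> (\<forall>e\<in>rels P. evalx A \<alpha> e = 0)}"

text \<open>Right lifting property of f : A \<rightarrow> B with respect to the morphism P \<rightarrow> Q
  sending each generator g of P to the element \<phi> g of Q.\<close>
definition rlp :: "('r::comm_ring_1, 'a::ab_group_add) mcx \<Rightarrow> ('r, 'b::ab_group_add) mcx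
    \<Rightarrow> ('a \<Rightarrow> 'b) \<Rightarrow> ('r, 'g) pres \<Rightarrow> ('r, 'h) pres \<Rightarrow> ('g \<Rightarrow> ('r, 'h) fexpr) \<Rightarrow> bool" where
  "rlp A B f P Q \<phi> \<longleftrightarrow>
     (\<forall>\<alpha> \<beta>. \<alpha> \<in> Hom P A \<longrightarrow> \<beta> \<in> Hom Q B \<longrightarrow>
        (\<forall>g\<in>gens P. f (\<alpha> g) = evalx B \<beta> (\<phi> g)) \<longrightarrow>
        (\<exists>\<gamma>\<in>Hom Q A. (\<forall>g\<in>gens P. evalx A \<gamma> (\<phi> g) = \<alpha> g)
                     \<and> (\<forall>h\<in>gens Q. f (\<gamma> h) = \<beta> h)))"

definition zrel :: "(nat \<Rightarrow> 'g) \<Rightarrow> nat \<Rightarrow> ('r::comm_ring_1, 'g) fexpr" where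
  "zrel gen k = map (\<lambda>i. ((-1) ^ i, [i], gen (k - i))) [0..<Suc k]"

text \<open>ZW_r(p,q): generators a_j (j < max 1 r) in bidegree (p-j,q-j); relations
  d_0 a_0 = 0 (r \<ge> 1) and d_0 a_k = \<Sum>_{i=1}^k (-1)^{i+1} d_i a_{k-i} (1 \<le> k < r),
  exactly the iterated pushouts of the paper.\<close>
definition ZWp :: "nat \<Rightarrow> int \<Rightarrow> int \<Rightarrow> ('r::comm_ring_1, nat) pres" where
  "ZWp r p q = \<lparr> gens = {..<max 1 r},
                  gdeg = (\<lambda>j. (p - int j, q - int j)),
                  rels = zrel id ` {..<r} \<rparr>"

datatype bwgen = Bg nat | Eg | Cg nat

text \<open>BW_r(p,q') for r \<ge> 1 (here q' = q - 1 is the bidegree of e):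
  ZW_{r-1}(p+r-1,q'+r-1) \<oplus> D(p,q') \<oplus> ZW_{r-1}(p-1,q'); for r = 1 this is D(p,q').\<close>
definition BWp :: "nat \<Rightarrow> int \<Rightarrow> int \<Rightarrow> ('r::comm_ring_1, bwgen) pres" where
  "BWp r p q = \<lparr> gens = {Eg} \<union> Bg ` {..<r - 1} \<union> Cg ` {..<r - 1},
                  gdeg = (\<lambda>g. case g of
                            Bg j \<Rightarrow> (p + int r - 1 - int j, q + int r - 1 - int j)
                          | Eg \<Rightarrow> (p, q)
                          | Cg j \<Rightarrow> (p - 1 - int j, q - int j)),
                  rels = zrel Bg ` {..<r - 1} \<union> zrel Cg ` {..<r - 1} \<rparr>"

definition iota :: "nat \<Rightarrow> nat \<Rightarrow> ('r::comm_ring_1, bwgen) fexpr" where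
  "iota r j = [(1, [j], Eg)]
      @ map (\<lambda>i. ((-1) ^ j * (-1) ^ i, [i], Bg (r + j - 1 - i))) [Suc j..<r + j]
      @ (if j = 0 then [] else [(1, [], Cg (j - 1))])"

definition zero_pres :: "('r, nat) pres" where
  "zero_pres = \<lparr> gens = {}, gdeg = (\<lambda>_. (0, 0)), rels = {} \<rparr>"

definition from_zero :: "nat \<Rightarrow> ('r, 'h) fexpr" where
  "from_zero g = []"

definition I_inj :: "nat \<Rightarrow> ('r::comm_ring_1, 'a::ab_group_add) mcx \<Rightarrow> ('r, 'b::ab_group_add) mcx
    \<Rightarrow> ('a \<Rightarrow> 'b) \<Rightarrow> bool" where
  "I_inj r A B f \<longleftrightarrow>
     (\<forall>p q. rlp A B f (ZWp (Suc r) p q) (BWp (Suc r) p (q - 1)) (iota (Suc r)))"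

definition J_inj :: "nat \<Rightarrow> ('r::comm_ring_1, 'a::ab_group_add) mcx \<Rightarrow> ('r, 'b::ab_group_add) mcx
    \<Rightarrow> ('a \<Rightarrow> 'b) \<Rightarrow> bool" where
  "J_inj r A B f \<longleftrightarrow> (\<forall>p q. rlp A B f zero_pres (ZWp r p q) from_zero)"

end

theory Submission
  imports Defs
begin

text \<open>Write D = \<Sum>i (-1)^i d_i. A map ZW_{r+1}(p,q) \<rightarrow> A is a family a_0, ..., a_r with
  (D a)_l = 0 for l \<le> r, and a_0 ranges over Z_{r+1}; the first two summands of BW_{r+1} carry
  a family b_0, ..., b_r with (D b)_l = 0 for l < r, whose value (D b)_r ranges over B_{r+1}.
  Unwinding the lifting problems against \<iota>_{r+1}, f \<in> I_r-inj says: whenever a cycle a_0 of A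
  is mapped to a boundary (D b)_r, then a_0 = (D b')_r for some b' lifting b. Taking a_0 = 0
  shows that ZW_{r+1}-families lift, which gives surjectivity of E_{r+1}(f) and the lifting
  properties for J_0 and J_r; general a_0 gives injectivity of E_{r+1}(f). Conversely, J_0 and
  J_r lift the families b; surjectivity of E_{r+1}(f) lifts a_0 up to a boundary, and after
  subtracting the lift, what remains vanishes at index 0 and is a shifted ZW_r-family, which
  lifts by J_r; finally injectivity of E_{r+1}(f) writes a_0 as a boundary (D u)_r, and
  correcting u by a lift of b - f u gives the required b'.\<close>

lemma sg_0 [simp]: "sg 0 x = x"
  by (simp add: sg_def)

lemma sg_Suc [simp]: "sg (Suc i) x = - sg i x"
  by (simp add: sg_def)

lemma sg_zero [simp]: "sg i 0 = 0"
  by (simp add: sg_def)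

lemma sg_add_distrib: "sg i (x + y) = sg i x + sg i y"
  by (simp add: sg_def)

lemma sg_uminus: "sg i (- x) = - sg i x"
  by (simp add: sg_def)

lemma sg_add: "sg (i + j) x = sg i (sg j x)"
  by (induct i) (auto simp: sg_uminus)

lemma sg_sg [simp]: "sg i (sg i x) = x"
  by (simp add: sg_def)

lemma sg_commute: "sg i (sg j x) = sg j (sg i x)"
  by (metis sg_add add.commute)

lemma sg_diff: "j \<le> i \<Longrightarrow> sg (i - j) x = sg i (sg j x)"
  by (metis sg_add sg_sg le_add_diff_inverse2)

lemma sg_sum: "sg i (sum g K) = (\<Sum>k\<in>K. sg i (g k))"
  by (simp add: sg_def sum_negf)

section \<open>Multicomplexes and the total differential\<close>

locale multicomplex =
  fixes n :: enat and M :: "('r::comm_ring_1, 'a::ab_group_add) mcx"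
  assumes is_mc: "is_mc n M"
begin

lemma zero_in_comp [simp]: "0 \<in> comp M p q"
  using is_mc by (simp add: is_mc_def)

lemma add_in_comp: "x \<in> comp M p q \<Longrightarrow> y \<in> comp M p q \<Longrightarrow> x + y \<in> comp M p q"
  using is_mc by (simp add: is_mc_def)

lemma uminus_in_comp: "x \<in> comp M p q \<Longrightarrow> - x \<in> comp M p q"
  using is_mc by (simp add: is_mc_def)

lemma diff_in_comp: "x \<in> comp M p q \<Longrightarrow> y \<in> comp M p q \<Longrightarrow> x - y \<in> comp M p q"
  unfolding diff_conv_add_uminus by (intro add_in_comp uminus_in_comp)

lemma sg_in_comp: "x \<in> comp M p q \<Longrightarrow> sg i x \<in> comp M p q"
  by (simp add: sg_def uminus_in_comp)

lemma sum_in_comp: "(\<And>k. k \<in> K \<Longrightarrow> g k \<in> comp M p q) \<Longrightarrow> sum g K \<in> comp M p q"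
  by (induct K rule: infinite_finite_induct) (auto intro: add_in_comp)

lemma dd_in_comp: "x \<in> comp M p q \<Longrightarrow> dd M i x \<in> comp M (p - int i) (q + 1 - int i)"
  using is_mc by (simp add: is_mc_def)

lemma dd_add: "x \<in> comp M p q \<Longrightarrow> y \<in> comp M p q \<Longrightarrow> dd M i (x + y) = dd M i x + dd M i y"
  using is_mc by (simp add: is_mc_def)

lemma dd_zero [simp]: "dd M i 0 = 0"
  using dd_add[of 0 0 0 0 i] by simp

lemma dd_uminus: "x \<in> comp M p q \<Longrightarrow> dd M i (- x) = - dd M i x"
  using dd_add[of x p q "- x" i] by (simp add: uminus_in_comp add_eq_0_iff2)

lemma dd_sg: "x \<in> comp M p q \<Longrightarrow> dd M i (sg k x) = sg k (dd M i x)"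
  by (simp add: sg_def dd_uminus)

lemma dd_sum: "(\<And>k. k \<in> K \<Longrightarrow> g k \<in> comp M p q) \<Longrightarrow> dd M i (sum g K) = (\<Sum>k\<in>K. dd M i (g k))"
proof (induct K rule: infinite_finite_induct)
  case (insert k K)
  then show ?case
    using dd_add[of "g k" p q "sum g K" i] by (simp add: sum_in_comp)
qed auto

lemma multicomplex_relation: "x \<in> comp M p q \<Longrightarrow> (\<Sum>i\<le>l. sg i (dd M i (dd M (l - i) x))) = 0"
  using is_mc unfolding is_mc_def by blast

lemma sc_one: "x \<in> comp M p q \<Longrightarrow> sc M 1 x = x"
  using is_mc by (simp add: is_mc_def)

lemma sc_add_left: "x \<in> comp M p q \<Longrightarrow> sc M (c + c') x = sc M c x + sc M c' x"
  using is_mc by (simp add: is_mc_def)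

lemma sc_mult: "x \<in> comp M p q \<Longrightarrow> sc M (c * c') x = sc M c (sc M c' x)"
  using is_mc by (simp add: is_mc_def)

lemma sc_minus_one: "x \<in> comp M p q \<Longrightarrow> sc M (- 1) x = - x"
proof -
  assume x: "x \<in> comp M p q"
  have "sc M 0 x = 0"
    using sc_add_left[OF x, of 0 0] by simp
  then show ?thesis
    using sc_add_left[OF x, of 1 "- 1"] sc_one[OF x] by (simp add: eq_neg_iff_add_eq_0 add.commute)
qed

lemma sc_minus_one_power: "x \<in> comp M p q \<Longrightarrow> sc M ((- 1) ^ i) x = sg i x"
proof (induct i)
  case 0
  then show ?case by (simp add: sc_one)
next
  case (Suc i)
  then show ?case
    using sc_mult[OF Suc(2), of "- 1" "(- 1) ^ i"] sc_minus_one[OF sg_in_comp[OF Suc(2)]] by simp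
qed

end

text \<open>For a family x with x k in bidegree (p - k, q - k), tdiff M x l is the component of
  bidegree (p - l, q + 1 - l) of D(\<Sum>k x k), where D = \<Sum>i (-1)^i d_i is the total differential.\<close>
definition tdiff :: "('r::comm_ring_1, 'a::ab_group_add) mcx \<Rightarrow> (nat \<Rightarrow> 'a) \<Rightarrow> nat \<Rightarrow> 'a" where
  "tdiff M x l = (\<Sum>i\<le>l. sg i (dd M i (x (l - i))))"

definition diag_seq :: "('r::comm_ring_1, 'a::ab_group_add) mcx \<Rightarrow> nat \<Rightarrow> int \<Rightarrow> int \<Rightarrow> (nat \<Rightarrow> 'a) \<Rightarrow> bool" where
  "diag_seq M m p q x \<longleftrightarrow> (\<forall>k<m. x k \<in> comp M (p - int k) (q - int k))"

lemma tdiff_cong: "(\<And>k. k \<le> l \<Longrightarrow> x k = y k) \<Longrightarrow> tdiff M x l = tdiff M y l"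
  unfolding tdiff_def by (intro sum.cong) auto

lemma diag_seqD: "diag_seq M m p q x \<Longrightarrow> k < m \<Longrightarrow> x k \<in> comp M (p - int k) (q - int k)"
  by (simp add: diag_seq_def)

lemma diag_seq_mono: "diag_seq M m p q x \<Longrightarrow> m' \<le> m \<Longrightarrow> diag_seq M m' p q x"
  by (auto simp: diag_seq_def)

context multicomplex
begin

lemma diag_seq_zero [simp]: "diag_seq M m p q (\<lambda>k. 0)"
  by (simp add: diag_seq_def)

lemma diag_seq_add: "diag_seq M m p q x \<Longrightarrow> diag_seq M m p q y \<Longrightarrow> diag_seq M m p q (\<lambda>k. x k + y k)"
  by (auto simp: diag_seq_def intro: add_in_comp)

lemma diag_seq_diff: "diag_seq M m p q x \<Longrightarrow> diag_seq M m p q y \<Longrightarrow> diag_seq M m p q (\<lambda>k. x k - y k)"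
  by (auto simp: diag_seq_def intro: diff_in_comp)

lemma dd_diag_seq_in_comp:
  assumes "diag_seq M (Suc l) p q x" "i \<le> l"
  shows "dd M i (x (l - i)) \<in> comp M (p - int l) (q + 1 - int l)"
proof -
  have "dd M i (x (l - i)) \<in> comp M (p - int (l - i) - int i) (q - int (l - i) + 1 - int i)"
    using assms by (intro dd_in_comp diag_seqD) auto
  with assms(2) show ?thesis by (simp add: of_nat_diff algebra_simps)
qed

lemma tdiff_in_comp: "diag_seq M (Suc l) p q x \<Longrightarrow> tdiff M x l \<in> comp M (p - int l) (q + 1 - int l)"
  unfolding tdiff_def by (intro sum_in_comp sg_in_comp dd_diag_seq_in_comp) auto

lemma tdiff_add:
  assumes "diag_seq M (Suc l) p q x" "diag_seq M (Suc l) p q y"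
  shows "tdiff M (\<lambda>k. x k + y k) l = tdiff M x l + tdiff M y l"
  unfolding tdiff_def sum.distrib[symmetric]
  using assms by (intro sum.cong refl) (simp add: dd_add[OF diag_seqD diag_seqD] sg_add_distrib)

lemma tdiff_diff:
  assumes "diag_seq M (Suc l) p q x" "diag_seq M (Suc l) p q y"
  shows "tdiff M (\<lambda>k. x k - y k) l = tdiff M x l - tdiff M y l"
proof -
  have "tdiff M (\<lambda>k. x k - y k) l + tdiff M y l = tdiff M x l"
    using tdiff_add[OF diag_seq_diff[OF assms] assms(2)] by simp
  then show ?thesis by (simp add: eq_diff_eq)
qed

lemma tdiff_zero [simp]: "tdiff M (\<lambda>k. 0) l = 0"
  by (simp add: tdiff_def)

lemma tdiff_shift: "x 0 = 0 \<Longrightarrow> tdiff M x (Suc l) = tdiff M (\<lambda>k. x (Suc k)) l"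
  unfolding tdiff_def sum.atMost_Suc by (simp add: Suc_diff_le)

lemma tdiff_sg:
  assumes "diag_seq M (Suc l) p q x"
  shows "tdiff M (\<lambda>k. sg c (x k)) l = sg c (tdiff M x l)"
  unfolding tdiff_def sg_sum
  using assms by (intro sum.cong refl) (simp add: dd_sg[OF diag_seqD] sg_commute)

lemma tdiff_shift_add: "(\<And>t. t < c \<Longrightarrow> v t = 0) \<Longrightarrow> tdiff M v (c + l) = tdiff M (\<lambda>j. v (c + j)) l"
proof (induct c arbitrary: v)
  case (Suc c)
  then have "tdiff M v (Suc c + l) = tdiff M (\<lambda>k. v (Suc k)) (c + l)"
    by (simp add: tdiff_shift)
  also have "\<dots> = tdiff M (\<lambda>j. v (Suc c + j)) l"
    using Suc by (subst Suc(1)) auto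
  finally show ?case .
qed simp

lemma dd_tdiff:
  assumes "diag_seq M (Suc l) p q b"
  shows "dd M i (tdiff M b l) = (\<Sum>k\<le>l. sg k (dd M i (dd M k (b (l - k)))))"
proof -
  have "dd M i (tdiff M b l) = (\<Sum>k\<le>l. dd M i (sg k (dd M k (b (l - k)))))"
    unfolding tdiff_def using assms
    by (intro dd_sum[where p = "p - int l" and q = "q + 1 - int l"] sg_in_comp dd_diag_seq_in_comp) auto
  also have "\<dots> = (\<Sum>k\<le>l. sg k (dd M i (dd M k (b (l - k)))))"
    by (intro sum.cong refl) (simp add: dd_sg[OF dd_diag_seq_in_comp[OF assms]])
  finally show ?thesis .
qed

text \<open>D \<circ> D = 0: regrouping the double sum by total index turns it into a sum of instances
  of the defining relation of a multicomplex.\<close>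
lemma tdiff_tdiff:
  assumes b: "diag_seq M (Suc L) p q b"
  shows "tdiff M (\<lambda>t. sg t (tdiff M b t)) L = 0"
proof -
  define G where "G i k = sg (L + k) (dd M i (dd M k (b (L - i - k))))" for i k
  have inner: "sg i (dd M i (sg (L - i) (tdiff M b (L - i)))) = (\<Sum>k\<le>L - i. G i k)"
    if i: "i \<le> L" for i
  proof -
    have bi: "diag_seq M (Suc (L - i)) p q b"
      using b by (rule diag_seq_mono) simp
    have "sg i (sg (L - i) (sg k X)) = sg (L + k) X" for k and X :: 'a
      using i by (simp add: sg_add[symmetric])
    then show ?thesis
      by (simp add: G_def dd_sg[OF tdiff_in_comp[OF bi]] dd_tdiff[OF bi] sg_sum diff_diff_add)
  qed
  have "tdiff M (\<lambda>t. sg t (tdiff M b t)) L = (\<Sum>i\<le>L. \<Sum>k\<le>L - i. G i k)"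
    unfolding tdiff_def[of M "\<lambda>t. sg t (tdiff M b t)"] by (intro sum.cong refl inner) simp
  also have "\<dots> = (\<Sum>(i, k)\<in>{(i, k). i + k \<le> L}. G i k)"
    by (subst sum.Sigma) (auto intro: sum.cong)
  also have "\<dots> = (\<Sum>t\<le>L. \<Sum>i\<le>t. G i (t - i))"
    by (rule sum.triangle_reindex_eq)
  also have "\<dots> = (\<Sum>t\<le>L. sg (L + t) (\<Sum>i\<le>t. sg i (dd M i (dd M (t - i) (b (L - t))))))"
  proof (intro sum.cong refl)
    fix t assume t: "t \<in> {..L}"
    have "G i (t - i) = sg (L + t) (sg i (dd M i (dd M (t - i) (b (L - t)))))" if "i \<le> t" for i
      using that t sg_diff[of i "L + t"] by (simp add: G_def add_diff_assoc)
    then show "(\<Sum>i\<le>t. G i (t - i)) = sg (L + t) (\<Sum>i\<le>t. sg i (dd M i (dd M (t - i) (b (L - t)))))"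
      by (simp add: sg_sum)
  qed
  also have "\<dots> = 0"
    using b by (simp add: multicomplex_relation[OF diag_seqD])
  finally show ?thesis .
qed

end

section \<open>Cycles, boundaries and the objects ZW and BW\<close>

text \<open>Maps out of ZW_m correspond to zw_elt sequences (elements a_0, ..., a_{m-1}, with a_0
  present even for m = 0), and Z_m is the set of their initial terms; bnd_witness sequences
  b_0, ..., b_c are those whose tdiff at c is an element of B_{c+1}.\<close>
definition zw_elt :: "('r::comm_ring_1, 'a::ab_group_add) mcx \<Rightarrow> nat \<Rightarrow> int \<Rightarrow> int \<Rightarrow> (nat \<Rightarrow> 'a) \<Rightarrow> bool" where
  "zw_elt M m p q x \<longleftrightarrow> diag_seq M (max 1 m) p q x \<and> (\<forall>l<m. tdiff M x l = 0)"

definition bnd_witness :: "('r::comm_ring_1, 'a::ab_group_add) mcx \<Rightarrow> nat \<Rightarrow> int \<Rightarrow> int \<Rightarrow> (nat \<Rightarrow> 'a) \<Rightarrow> bool" where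
  "bnd_witness M c p q b \<longleftrightarrow> diag_seq M (Suc c) p q b \<and> (\<forall>l<c. tdiff M b l = 0)"

lemma zw_elt_Suc_iff: "zw_elt M (Suc c) p q x \<longleftrightarrow> bnd_witness M c p q x \<and> tdiff M x c = 0"
  by (auto simp: zw_elt_def bnd_witness_def less_Suc_eq)

lemma zw_elt_in_comp: "zw_elt M m p q x \<Longrightarrow> x 0 \<in> comp M p q"
  using diag_seqD[of M "max 1 m" p q x 0] by (simp add: zw_elt_def)

lemma Zset_eq_zw_elt: "Zset M m p q = {x 0 | x. zw_elt M m p q x}"
proof (intro set_eqI iffI)
  fix a0 assume "a0 \<in> Zset M m p q"
  then obtain a where a: "a 0 = a0" "a0 \<in> comp M p q"
      "\<forall>j. 1 \<le> j \<and> j < m \<longrightarrow> a j \<in> comp M (p - int j) (q - int j)" "\<forall>l<m. tdiff M a l = 0"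
    unfolding Zset_def tdiff_def by blast
  then have "diag_seq M (max 1 m) p q a"
    unfolding diag_seq_def by (metis One_nat_def Suc_leI less_max_iff_disj less_one neq0_conv diff_zero of_nat_0)
  with a show "a0 \<in> {x 0 | x. zw_elt M m p q x}"
    by (auto simp: zw_elt_def)
next
  fix a0 assume "a0 \<in> {x 0 | x. zw_elt M m p q x}"
  then obtain a where "a 0 = a0" "zw_elt M m p q a"
    by blast
  then show "a0 \<in> Zset M m p q"
    unfolding Zset_def zw_elt_def tdiff_def diag_seq_def by force
qed

lemma Bset_eq_tdiff: "Bset M (Suc c) p q = {tdiff M b c | b. bnd_witness M c (p + int c) (q + int c - 1) b}"
proof -
  have "(\<Sum>i<Suc c. sg i (dd M i (b (Suc c - 1 - i)))) = tdiff M b c" for b :: "nat \<Rightarrow> 'a"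
    by (simp add: tdiff_def lessThan_Suc_atMost)
  moreover have "(\<forall>i<Suc c. b i \<in> comp M (p + int (Suc c) - 1 - int i) (q + int (Suc c) - 2 - int i))
      \<longleftrightarrow> diag_seq M (Suc c) (p + int c) (q + int c - 1) b" for b :: "nat \<Rightarrow> 'a"
    by (simp add: diag_seq_def algebra_simps)
  moreover have "(\<forall>l. l + 2 \<le> Suc c \<longrightarrow> (\<Sum>i\<le>l. sg i (dd M i (b (l - i)))) = 0) \<longleftrightarrow> (\<forall>l<c. tdiff M b l = 0)"
    for b :: "nat \<Rightarrow> 'a"
    by (auto simp: tdiff_def)
  ultimately show ?thesis
    unfolding Bset_def bnd_witness_def by auto
qed

lemma zw_elt_pos_iff: "0 < c \<Longrightarrow> zw_elt M c p q x \<longleftrightarrow> diag_seq M c p q x \<and> (\<forall>l<c. tdiff M x l = 0)"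
  by (simp add: zw_elt_def max_absorb2)

text \<open>The terms of the sequence D(b_0 + ... + b_c) from index c on, with signs: for the
  generators of BW_{c+1}, these are the images of a_0, ..., a_c under \<iota>_{c+1} when the
  third summand is sent to zero.\<close>
definition bnd_seq :: "('r::comm_ring_1, 'a::ab_group_add) mcx \<Rightarrow> nat \<Rightarrow> (nat \<Rightarrow> 'a) \<Rightarrow> nat \<Rightarrow> 'a" where
  "bnd_seq M c b j = sg j (tdiff M (\<lambda>k. if k \<le> c then b k else 0) (c + j))"

lemma bnd_seq_cong: "(\<And>k. k \<le> c \<Longrightarrow> b k = b' k) \<Longrightarrow> bnd_seq M c b j = bnd_seq M c b' j"
  by (simp add: bnd_seq_def cong: if_cong)

lemma bnd_seq_0: "bnd_seq M c b 0 = tdiff M b c"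
  unfolding bnd_seq_def by (simp, intro tdiff_cong) simp

text \<open>The generators b_0, ..., b_{c-1}, e of the first two summands of BW_{c+1}, read as
  one sequence.\<close>
definition bw_seq :: "nat \<Rightarrow> (bwgen \<Rightarrow> 'a) \<Rightarrow> nat \<Rightarrow> 'a" where
  "bw_seq c \<gamma> k = (if k < c then \<gamma> (Bg k) else \<gamma> Eg)"

text \<open>The map BW_{c+1}(p, q - 1) \<rightarrow> M through which a map a : ZW_{c+1}(p, q) \<rightarrow> M factors
  along \<iota>_{c+1}, given b with a_0 = D b: the third summand receives a - \<iota>(b), whose initial
  term vanishes.\<close>
definition bw_assign :: "('r::comm_ring_1, 'a::ab_group_add) mcx \<Rightarrow> nat \<Rightarrow> (nat \<Rightarrow> 'a) \<Rightarrow> (nat \<Rightarrow> 'a) \<Rightarrow> bwgen \<Rightarrow> 'a" where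
  "bw_assign M c a b g = (case g of Bg k \<Rightarrow> b k | Eg \<Rightarrow> b c | Cg k \<Rightarrow> a (Suc k) - bnd_seq M c b (Suc k))"

lemma bw_seq_bw_assign: "k \<le> c \<Longrightarrow> bw_seq c (bw_assign M c a b) k = b k"
  by (simp add: bw_seq_def bw_assign_def)

context multicomplex
begin

lemma zw_elt_zero [simp]: "zw_elt M m p q (\<lambda>k. 0)"
  by (simp add: zw_elt_def)

lemma zw_elt_add:
  assumes "zw_elt M m p q x" "zw_elt M m p q y"
  shows "zw_elt M m p q (\<lambda>k. x k + y k)"
  using assms unfolding zw_elt_def
  by (auto intro: diag_seq_add simp: tdiff_add[OF diag_seq_mono diag_seq_mono])

lemma zw_elt_diff:
  assumes "zw_elt M m p q x" "zw_elt M m p q y"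
  shows "zw_elt M m p q (\<lambda>k. x k - y k)"
  using assms unfolding zw_elt_def
  by (auto intro: diag_seq_diff simp: tdiff_diff[OF diag_seq_mono diag_seq_mono])

lemma bnd_witness_add:
  assumes "bnd_witness M c p q x" "bnd_witness M c p q y"
  shows "bnd_witness M c p q (\<lambda>k. x k + y k)"
  using assms unfolding bnd_witness_def
  by (auto intro: diag_seq_add simp: tdiff_add[OF diag_seq_mono diag_seq_mono])

lemma bnd_witness_diff:
  assumes "bnd_witness M c p q x" "bnd_witness M c p q y"
  shows "bnd_witness M c p q (\<lambda>k. x k - y k)"
  using assms unfolding bnd_witness_def
  by (auto intro: diag_seq_diff simp: tdiff_diff[OF diag_seq_mono diag_seq_mono])

lemma zw_elt_shift:
  assumes x: "zw_elt M (Suc c) p q x" and x0: "x 0 = 0"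
  shows "diag_seq M c (p - 1) (q - 1) (\<lambda>k. x (Suc k))" and "\<forall>l<c. tdiff M (\<lambda>k. x (Suc k)) l = 0"
proof -
  have "x (Suc k) \<in> comp M (p - 1 - int k) (q - 1 - int k)" if "k < c" for k
    using x that diag_seqD[of M "Suc c" p q x "Suc k"] by (simp add: zw_elt_def algebra_simps)
  then show "diag_seq M c (p - 1) (q - 1) (\<lambda>k. x (Suc k))"
    by (simp add: diag_seq_def)
  show "\<forall>l<c. tdiff M (\<lambda>k. x (Suc k)) l = 0"
    using x x0 by (simp add: zw_elt_def tdiff_shift[symmetric])
qed

lemma zw_elt_unshift:
  assumes x: "zw_elt M c (p - 1) (q - 1) x" and c: "0 < c"
  shows "zw_elt M (Suc c) p q (\<lambda>k. if k = 0 then 0 else x (k - 1))"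
proof -
  let ?y = "\<lambda>k. if k = 0 then 0 else x (k - 1)"
  have "?y k \<in> comp M (p - int k) (q - int k)" if "k < Suc c" for k
    using x c that diag_seqD[of M c "p - 1" "q - 1" x "k - 1"]
    by (cases k) (simp_all add: zw_elt_pos_iff algebra_simps)
  moreover have "tdiff M ?y l = 0" if "l < Suc c" for l
    using x c that tdiff_shift[of ?y "l - 1"] by (cases l) (simp_all add: zw_elt_pos_iff tdiff_def)
  ultimately show ?thesis
    by (simp add: zw_elt_def diag_seq_def)
qed

lemma diag_seq_truncate: "diag_seq M (Suc c) p q b \<Longrightarrow> diag_seq M m p q (\<lambda>k. if k \<le> c then b k else 0)"
  by (auto simp: diag_seq_def)

lemma bnd_seq_in_comp:
  assumes "diag_seq M (Suc c) (p + int c) (q + int c - 1) b"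
  shows "bnd_seq M c b j \<in> comp M (p - int j) (q - int j)"
  using tdiff_in_comp[OF diag_seq_truncate[OF assms], of "c + j"]
  by (simp add: bnd_seq_def sg_in_comp algebra_simps)

lemma bnd_seq_expand:
  "bnd_seq M c b j = dd M j (b c) + (\<Sum>i\<in>{Suc j..<Suc c + j}. sg j (sg i (dd M i (b (c + j - i)))))"
proof -
  let ?b = "\<lambda>k. if k \<le> c then b k else 0"
  have split: "{..c + j} = {..<j} \<union> ({j} \<union> {Suc j..<Suc c + j})"
    by auto
  have "(\<Sum>i<j. sg i (dd M i (?b (c + j - i)))) = 0"
    by (intro sum.neutral) auto
  moreover have "(\<Sum>i\<in>{Suc j..<Suc c + j}. sg i (dd M i (?b (c + j - i))))
      = (\<Sum>i\<in>{Suc j..<Suc c + j}. sg i (dd M i (b (c + j - i))))"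
    by (intro sum.cong) auto
  moreover have "tdiff M ?b (c + j) = (\<Sum>i<j. sg i (dd M i (?b (c + j - i))))
      + (sg j (dd M j (?b c)) + (\<Sum>i\<in>{Suc j..<Suc c + j}. sg i (dd M i (?b (c + j - i)))))"
    unfolding tdiff_def split by (subst sum.union_disjoint, auto)+
  ultimately have "tdiff M ?b (c + j) = sg j (dd M j (b c)) + (\<Sum>i\<in>{Suc j..<Suc c + j}. sg i (dd M i (b (c + j - i))))"
    by simp
  then show ?thesis
    by (simp add: bnd_seq_def sg_add_distrib sg_sum)
qed

text \<open>The relations of ZW_m hold for every m because D(D b) = 0 and D b vanishes below
  index c.\<close>
lemma zw_elt_bnd_seq:
  assumes b: "bnd_witness M c (p + int c) (q + int c - 1) b"
  shows "zw_elt M m p q (bnd_seq M c b)"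
proof -
  let ?b = "\<lambda>k. if k \<le> c then b k else 0"
  define v where "v t = sg t (tdiff M ?b t)" for t
  have bT: "diag_seq M (Suc c) (p + int c) (q + int c - 1) b"
    using b by (simp add: bnd_witness_def)
  have v_in_comp: "v t \<in> comp M (p + int c - int t) (q + int c - int t)" for t
    using tdiff_in_comp[OF diag_seq_truncate[OF bT], of t] by (simp add: v_def sg_in_comp algebra_simps)
  have v_low: "v t = 0" if "t < c" for t
  proof -
    have "tdiff M ?b t = tdiff M b t"
      using that by (intro tdiff_cong) auto
    then show ?thesis
      using b that by (simp add: v_def bnd_witness_def)
  qed
  have bnd_v: "bnd_seq M c b j = sg c (v (c + j))" for j
    by (simp add: bnd_seq_def v_def sg_add)
  have "tdiff M (bnd_seq M c b) l = 0" for l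
  proof -
    have "v (c + k) \<in> comp M (p - int k) (q - int k)" for k
      using v_in_comp[of "c + k"] by (simp add: algebra_simps)
    then have "diag_seq M (Suc l) p q (\<lambda>j. v (c + j))"
      by (simp add: diag_seq_def)
    then have "tdiff M (bnd_seq M c b) l = sg c (tdiff M (\<lambda>j. v (c + j)) l)"
      unfolding bnd_v by (rule tdiff_sg)
    also have "\<dots> = sg c (tdiff M v (c + l))"
      using v_low by (simp add: tdiff_shift_add)
    also have "tdiff M v (c + l) = 0"
      unfolding v_def by (rule tdiff_tdiff[OF diag_seq_truncate[OF bT]])
    finally show ?thesis by simp
  qed
  then show ?thesis
    using bnd_seq_in_comp[OF bT] by (simp add: zw_elt_def diag_seq_def)
qed

lemma Zset_in_comp: "z \<in> Zset M m p q \<Longrightarrow> z \<in> comp M p q"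
  by (auto simp: Zset_eq_zw_elt zw_elt_in_comp)

lemma Zset_zero: "0 \<in> Zset M m p q"
  unfolding Zset_eq_zw_elt using zw_elt_zero by force

lemma Zset_diff: "z \<in> Zset M m p q \<Longrightarrow> z' \<in> Zset M m p q \<Longrightarrow> z - z' \<in> Zset M m p q"
  unfolding Zset_eq_zw_elt using zw_elt_diff by force

lemma tdiff_bnd_witness_add:
  "bnd_witness M c p q x \<Longrightarrow> bnd_witness M c p q y \<Longrightarrow> tdiff M (\<lambda>k. x k + y k) c = tdiff M x c + tdiff M y c"
  unfolding bnd_witness_def by (metis tdiff_add)

lemma tdiff_bnd_witness_diff:
  "bnd_witness M c p q x \<Longrightarrow> bnd_witness M c p q y \<Longrightarrow> tdiff M (\<lambda>k. x k - y k) c = tdiff M x c - tdiff M y c"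
  unfolding bnd_witness_def by (metis tdiff_diff)

lemma Bset_zero: "0 \<in> Bset M (Suc c) p q"
proof -
  have "bnd_witness M c (p + int c) (q + int c - 1) (\<lambda>k. 0)"
    by (simp add: bnd_witness_def)
  then show ?thesis
    unfolding Bset_eq_tdiff by force
qed

lemma Bset_add: "x \<in> Bset M (Suc c) p q \<Longrightarrow> y \<in> Bset M (Suc c) p q \<Longrightarrow> x + y \<in> Bset M (Suc c) p q"
  unfolding Bset_eq_tdiff using bnd_witness_add tdiff_bnd_witness_add by (smt (verit) mem_Collect_eq)

lemma Bset_diff: "x \<in> Bset M (Suc c) p q \<Longrightarrow> y \<in> Bset M (Suc c) p q \<Longrightarrow> x - y \<in> Bset M (Suc c) p q"
  unfolding Bset_eq_tdiff using bnd_witness_diff tdiff_bnd_witness_diff by (smt (verit) mem_Collect_eq)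

lemma coset_of_eq_iff:
  "coset_of M (Suc c) p q z = coset_of M (Suc c) p q z' \<longleftrightarrow> z - z' \<in> Bset M (Suc c) p q"
proof
  assume eq: "coset_of M (Suc c) p q z = coset_of M (Suc c) p q z'"
  have "z \<in> coset_of M (Suc c) p q z"
    unfolding coset_of_def using Bset_zero by force
  then have "z \<in> coset_of M (Suc c) p q z'"
    by (simp only: eq)
  then obtain b where "b \<in> Bset M (Suc c) p q" "z = z' + b"
    unfolding coset_of_def by blast
  then show "z - z' \<in> Bset M (Suc c) p q"
    by simp
next
  assume d: "z - z' \<in> Bset M (Suc c) p q"
  have "z + b = z' + ((z - z') + b)" "z' + b = z + (b - (z - z'))" for b
    by (simp_all add: algebra_simps)
  then show "coset_of M (Suc c) p q z = coset_of M (Suc c) p q z'"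
    unfolding coset_of_def using Bset_add[OF d] Bset_diff[OF _ d] by metis
qed

lemma evalx_zrel:
  assumes "diag_seq M (Suc k) p q (\<lambda>j. \<alpha> (gen j))"
  shows "evalx M \<alpha> (zrel gen k) = tdiff M (\<lambda>j. \<alpha> (gen j)) k"
proof -
  have "evalx M \<alpha> (zrel gen k) = (\<Sum>i\<le>k. sc M ((- 1) ^ i) (dd M i (\<alpha> (gen (k - i)))))"
    by (simp add: evalx_def zrel_def o_def sum_set_upt_conv_sum_list_nat[symmetric] atLeast0LessThan
        lessThan_Suc_atMost del: upt_Suc)
  also have "\<dots> = tdiff M (\<lambda>j. \<alpha> (gen j)) k"
    unfolding tdiff_def using assms
    by (intro sum.cong refl) (simp add: sc_minus_one_power[OF dd_diag_seq_in_comp[OF assms]])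
  finally show ?thesis .
qed

lemma Hom_ZWp_iff: "\<alpha> \<in> Hom (ZWp m p q) M \<longleftrightarrow> zw_elt M m p q \<alpha>"
proof -
  have "evalx M \<alpha> (zrel id k) = tdiff M \<alpha> k" if "diag_seq M (max 1 m) p q \<alpha>" "k < m" for k
    using that by (simp add: evalx_zrel[OF diag_seq_mono])
  then show ?thesis
    by (auto simp: Hom_def zw_elt_def ZWp_def diag_seq_def)
qed

lemma Hom_BWp_iff:
  "\<gamma> \<in> Hom (BWp (Suc c) p (q - 1)) M \<longleftrightarrow>
     bnd_witness M c (p + int c) (q + int c - 1) (bw_seq c \<gamma>)
     \<and> diag_seq M c (p - 1) (q - 1) (\<lambda>k. \<gamma> (Cg k)) \<and> (\<forall>l<c. tdiff M (\<lambda>k. \<gamma> (Cg k)) l = 0)"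
proof -
  let ?P = "BWp (Suc c) p (q - 1) :: ('r, bwgen) pres"
  have gens: "(\<forall>g\<in>gens ?P. \<gamma> g \<in> comp M (fst (gdeg ?P g)) (snd (gdeg ?P g)))
      \<longleftrightarrow> diag_seq M (Suc c) (p + int c) (q + int c - 1) (bw_seq c \<gamma>)
          \<and> diag_seq M c (p - 1) (q - 1) (\<lambda>k. \<gamma> (Cg k))"
    by (auto simp: BWp_def diag_seq_def bw_seq_def less_Suc_eq ball_Un algebra_simps)
  have "evalx M \<gamma> (zrel Bg k) = tdiff M (bw_seq c \<gamma>) k"
    if "diag_seq M (Suc c) (p + int c) (q + int c - 1) (bw_seq c \<gamma>)" "k < c" for k
  proof -
    have "\<gamma> (Bg i) \<in> comp M (p + int c - int i) (q + int c - 1 - int i)" if "i < Suc k" for i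
      using diag_seqD[OF \<open>diag_seq M (Suc c) _ _ _\<close>, of i] that \<open>k < c\<close> by (simp add: bw_seq_def)
    then have "diag_seq M (Suc k) (p + int c) (q + int c - 1) (\<lambda>j. \<gamma> (Bg j))"
      by (simp add: diag_seq_def)
    then show ?thesis
      using that(2) by (simp add: evalx_zrel bw_seq_def cong: tdiff_cong)
  qed
  moreover have "evalx M \<gamma> (zrel Cg k) = tdiff M (\<lambda>j. \<gamma> (Cg j)) k"
    if "diag_seq M c (p - 1) (q - 1) (\<lambda>k. \<gamma> (Cg k))" "k < c" for k
    using that by (intro evalx_zrel[where p = "p - 1" and q = "q - 1"] diag_seq_mono[OF that(1)]) auto
  ultimately show ?thesis
    unfolding Hom_def bnd_witness_def mem_Collect_eq gens by (auto simp: BWp_def)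
qed

lemma evalx_iota:
  assumes \<gamma>: "\<gamma> \<in> Hom (BWp (Suc c) p (q - 1)) M" and j: "j < Suc c"
  shows "evalx M \<gamma> (iota (Suc c) j) = bnd_seq M c (bw_seq c \<gamma>) j + (if j = 0 then 0 else \<gamma> (Cg (j - 1)))"
proof -
  let ?b = "bw_seq c \<gamma>"
  have b: "diag_seq M (Suc c) (p + int c) (q + int c - 1) ?b"
    and C: "diag_seq M c (p - 1) (q - 1) (\<lambda>k. \<gamma> (Cg k))"
    using \<gamma> by (simp_all add: Hom_BWp_iff bnd_witness_def)
  have E: "\<gamma> Eg \<in> comp M p (q - 1)"
    using diag_seqD[OF b, of c] by (simp add: bw_seq_def)
  have "sc M ((- 1) ^ j * (- 1) ^ i) (dd M i (\<gamma> (Bg (Suc c + j - 1 - i))))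
      = sg j (sg i (dd M i (?b (c + j - i))))" if "i \<in> {Suc j..<Suc c + j}" for i
  proof -
    have "c + j - i < c"
      using that by auto
    have "?b (c + j - i) \<in> comp M (p + int c - int (c + j - i)) (q + int c - 1 - int (c + j - i))"
      using that by (intro diag_seqD[OF b]) auto
    then show ?thesis
      using that \<open>c + j - i < c\<close>
      by (simp add: power_add[symmetric] sc_minus_one_power[OF dd_in_comp] sg_add bw_seq_def)
  qed
  then have "sum_list (map (\<lambda>i. sc M ((- 1) ^ j * (- 1) ^ i) (dd M i (\<gamma> (Bg (Suc c + j - 1 - i))))) [Suc j..<Suc c + j])
      = (\<Sum>i\<in>{Suc j..<Suc c + j}. sg j (sg i (dd M i (?b (c + j - i)))))"
    by (simp add: sum_set_upt_conv_sum_list_nat[symmetric] del: upt_Suc)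
  moreover have "sc M 1 (\<gamma> (Cg (j - 1))) = \<gamma> (Cg (j - 1))" if "j \<noteq> 0"
  proof -
    have "\<gamma> (Cg (j - 1)) \<in> comp M (p - 1 - int (j - 1)) (q - 1 - int (j - 1))"
      using that j diag_seqD[OF C, of "j - 1"] by simp
    then show ?thesis by (rule sc_one)
  qed
  ultimately show ?thesis
    using sc_one[OF dd_in_comp[OF E]]
    by (simp add: evalx_def iota_def o_def bnd_seq_expand bw_seq_def del: upt_Suc)
qed

lemma
  assumes a: "zw_elt M (Suc c) p q a" and b: "bnd_witness M c (p + int c) (q + int c - 1) b"
    and a0: "a 0 = tdiff M b c"
  shows Hom_bw_assign: "bw_assign M c a b \<in> Hom (BWp (Suc c) p (q - 1)) M"
    and evalx_iota_bw_assign: "j < Suc c \<Longrightarrow> evalx M (bw_assign M c a b) (iota (Suc c) j) = a j"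
proof -
  let ?x = "\<lambda>k. a k - bnd_seq M c b k"
  have "zw_elt M (Suc c) p q ?x"
    by (rule zw_elt_diff[OF a zw_elt_bnd_seq[OF b]])
  moreover have "?x 0 = 0"
    by (simp add: a0 bnd_seq_0)
  moreover have "bnd_witness M c (p + int c) (q + int c - 1) (bw_seq c (bw_assign M c a b))"
    using b by (simp add: bnd_witness_def diag_seq_def bw_seq_bw_assign cong: tdiff_cong)
  ultimately show \<gamma>: "bw_assign M c a b \<in> Hom (BWp (Suc c) p (q - 1)) M"
    unfolding Hom_BWp_iff by (auto dest: zw_elt_shift simp: bw_assign_def)
  show "evalx M (bw_assign M c a b) (iota (Suc c) j) = a j" if "j < Suc c"
    using evalx_iota[OF \<gamma> that] a0
    by (simp add: bnd_seq_cong[OF bw_seq_bw_assign] bnd_seq_0 bw_assign_def)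
qed

end

section \<open>E-quasi-isomorphisms and lifting properties\<close>

definition E_injective :: "('r::comm_ring_1, 'a::ab_group_add) mcx \<Rightarrow> ('r, 'b::ab_group_add) mcx \<Rightarrow> ('a \<Rightarrow> 'b) \<Rightarrow> nat \<Rightarrow> bool" where
  "E_injective A B f c \<longleftrightarrow>
     (\<forall>p q. \<forall>z\<in>Zset A (Suc c) p q. f z \<in> Bset B (Suc c) p q \<longrightarrow> z \<in> Bset A (Suc c) p q)"

definition E_surjective :: "('r::comm_ring_1, 'a::ab_group_add) mcx \<Rightarrow> ('r, 'b::ab_group_add) mcx \<Rightarrow> ('a \<Rightarrow> 'b) \<Rightarrow> nat \<Rightarrow> bool" where
  "E_surjective A B f c \<longleftrightarrow>
     (\<forall>p q. \<forall>w\<in>Zset B (Suc c) p q. \<exists>z\<in>Zset A (Suc c) p q. w - f z \<in> Bset B (Suc c) p q)"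

definition zw_lift :: "('r::comm_ring_1, 'a::ab_group_add) mcx \<Rightarrow> ('r, 'b::ab_group_add) mcx \<Rightarrow> ('a \<Rightarrow> 'b) \<Rightarrow> nat \<Rightarrow> bool" where
  "zw_lift A B f m \<longleftrightarrow>
     (\<forall>p q x. zw_elt B m p q x \<longrightarrow> (\<exists>y. zw_elt A m p q y \<and> (\<forall>j<max 1 m. f (y j) = x j)))"

definition bnd_witness_lift :: "('r::comm_ring_1, 'a::ab_group_add) mcx \<Rightarrow> ('r, 'b::ab_group_add) mcx \<Rightarrow> ('a \<Rightarrow> 'b) \<Rightarrow> nat \<Rightarrow> bool" where
  "bnd_witness_lift A B f c \<longleftrightarrow>
     (\<forall>p q b. bnd_witness B c p q b \<longrightarrow> (\<exists>b'. bnd_witness A c p q b' \<and> (\<forall>k\<le>c. f (b' k) = b k)))"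

text \<open>The lifting problems against \<iota>_{c+1}, unwound: a cycle of A whose image is a boundary
  D b is itself a boundary D b', with b' lifting b.\<close>
definition boundary_lift :: "('r::comm_ring_1, 'a::ab_group_add) mcx \<Rightarrow> ('r, 'b::ab_group_add) mcx \<Rightarrow> ('a \<Rightarrow> 'b) \<Rightarrow> nat \<Rightarrow> bool" where
  "boundary_lift A B f c \<longleftrightarrow>
     (\<forall>p q a0 b. a0 \<in> Zset A (Suc c) p q \<longrightarrow> bnd_witness B c (p + int c) (q + int c - 1) b
        \<longrightarrow> f a0 = tdiff B b c \<longrightarrow>
        (\<exists>b'. bnd_witness A c (p + int c) (q + int c - 1) b' \<and> (\<forall>k\<le>c. f (b' k) = b k) \<and> tdiff A b' c = a0))"

lemma boundary_liftD:
  assumes "boundary_lift A B f c" "a0 \<in> Zset A (Suc c) (p - int c) (q + 1 - int c)"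
    "bnd_witness B c p q b" "f a0 = tdiff B b c"
  shows "\<exists>b'. bnd_witness A c p q b' \<and> (\<forall>k\<le>c. f (b' k) = b k) \<and> tdiff A b' c = a0"
  using assms unfolding boundary_lift_def by (metis add_diff_cancel_right' diff_add_cancel)

locale mc_morphism =
  A: multicomplex nA A + B: multicomplex nB B
  for nA nB :: enat and A :: "('r::comm_ring_1, 'a::ab_group_add) mcx" and B :: "('r, 'b::ab_group_add) mcx" +
  fixes f :: "'a \<Rightarrow> 'b"
  assumes hom: "mc_hom A B f"
begin

lemma hom_in_comp: "x \<in> comp A p q \<Longrightarrow> f x \<in> comp B p q"
  using hom by (simp add: mc_hom_def)

lemma hom_add: "x \<in> comp A p q \<Longrightarrow> y \<in> comp A p q \<Longrightarrow> f (x + y) = f x + f y"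
  using hom by (simp add: mc_hom_def)

lemma hom_dd: "x \<in> comp A p q \<Longrightarrow> f (dd A i x) = dd B i (f x)"
  using hom by (simp add: mc_hom_def)

lemma hom_zero [simp]: "f 0 = 0"
  using hom_add[of 0 0 0 0] by simp

lemma hom_diff: "x \<in> comp A p q \<Longrightarrow> y \<in> comp A p q \<Longrightarrow> f (x - y) = f x - f y"
  using hom_add[of "x - y" p q y] by (simp add: A.diff_in_comp eq_diff_eq)

lemma hom_sg: "x \<in> comp A p q \<Longrightarrow> f (sg i x) = sg i (f x)"
  using hom_diff[of 0 p q x] by (simp add: sg_def)

lemma hom_sum: "(\<And>k. k \<in> K \<Longrightarrow> g k \<in> comp A p q) \<Longrightarrow> f (sum g K) = (\<Sum>k\<in>K. f (g k))"
proof (induct K rule: infinite_finite_induct)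
  case (insert k K)
  then show ?case
    using hom_add[of "g k" p q "sum g K"] by (simp add: A.sum_in_comp)
qed auto

lemma hom_tdiff:
  assumes x: "diag_seq A (Suc l) p q x"
  shows "f (tdiff A x l) = tdiff B (\<lambda>k. f (x k)) l"
proof -
  have "f (tdiff A x l) = (\<Sum>i\<le>l. f (sg i (dd A i (x (l - i)))))"
    unfolding tdiff_def using x
    by (intro hom_sum[where p = "p - int l" and q = "q + 1 - int l"] A.sg_in_comp A.dd_diag_seq_in_comp) auto
  also have "\<dots> = tdiff B (\<lambda>k. f (x k)) l"
    unfolding tdiff_def
    by (intro sum.cong refl) (simp add: hom_sg[OF A.dd_diag_seq_in_comp[OF x]] hom_dd[OF diag_seqD[OF x]])
  finally show ?thesis .
qed

lemma hom_diag_seq: "diag_seq A m p q x \<Longrightarrow> diag_seq B m p q (\<lambda>k. f (x k))"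
  by (auto simp: diag_seq_def intro: hom_in_comp)

lemma hom_bnd_seq:
  assumes "diag_seq A (Suc c) (p + int c) (q + int c - 1) b"
  shows "f (bnd_seq A c b j) = bnd_seq B c (\<lambda>k. f (b k)) j"
proof -
  have "(\<lambda>k. f (if k \<le> c then b k else 0)) = (\<lambda>k. if k \<le> c then f (b k) else 0)"
    by auto
  then show ?thesis
    using hom_tdiff[OF A.diag_seq_truncate[OF assms], of "c + j"]
    by (simp add: bnd_seq_def hom_sg[OF A.tdiff_in_comp[OF A.diag_seq_truncate[OF assms]]])
qed

lemma hom_tdiff_eq_0:
  "diag_seq A m p q a \<Longrightarrow> l < m \<Longrightarrow> tdiff A a l = 0 \<Longrightarrow> tdiff B (\<lambda>k. f (a k)) l = 0"
  using hom_tdiff[OF diag_seq_mono, of m p q a l] by simp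

lemma hom_zw_elt: "zw_elt A m p q a \<Longrightarrow> zw_elt B m p q (\<lambda>k. f (a k))"
  unfolding zw_elt_def using hom_tdiff_eq_0[of "max 1 m" p q a] by (simp add: hom_diag_seq)

lemma hom_bnd_witness: "bnd_witness A c p q b \<Longrightarrow> bnd_witness B c p q (\<lambda>k. f (b k))"
  unfolding bnd_witness_def using hom_tdiff_eq_0[of "Suc c" p q b] by (simp add: hom_diag_seq)

lemma hom_Zset: "z \<in> Zset A m p q \<Longrightarrow> f z \<in> Zset B m p q"
  unfolding Zset_eq_zw_elt using hom_zw_elt by fastforce

lemma hom_Bset:
  assumes "x \<in> Bset A (Suc c) p q"
  shows "f x \<in> Bset B (Suc c) p q"
proof -
  obtain b where b: "bnd_witness A c (p + int c) (q + int c - 1) b" and x: "x = tdiff A b c"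
    using assms by (auto simp: Bset_eq_tdiff)
  then have "f x = tdiff B (\<lambda>k. f (b k)) c"
    using hom_tdiff[of c "p + int c" "q + int c - 1" b] by (simp add: bnd_witness_def)
  with hom_bnd_witness[OF b] show ?thesis
    unfolding Bset_eq_tdiff by blast
qed

text \<open>Emap picks an arbitrary representative of the coset; since f preserves boundaries,
  the choice does not matter.\<close>
lemma Emap_coset:
  assumes z: "z \<in> Zset A (Suc c) p q"
  shows "Emap A B f (Suc c) p q (coset_of A (Suc c) p q z) = coset_of B (Suc c) p q (f z)"
proof -
  define z' where "z' = (SOME z'. z' \<in> Zset A (Suc c) p q \<and> coset_of A (Suc c) p q z = coset_of A (Suc c) p q z')"
  have "z' \<in> Zset A (Suc c) p q \<and> coset_of A (Suc c) p q z = coset_of A (Suc c) p q z'"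
    unfolding z'_def by (rule someI_ex) (use z in blast)
  then have z': "z' \<in> Zset A (Suc c) p q" and "z - z' \<in> Bset A (Suc c) p q"
    by (simp_all only: A.coset_of_eq_iff)
  then have "f (z - z') \<in> Bset B (Suc c) p q"
    by (intro hom_Bset)
  then have "f z - f z' \<in> Bset B (Suc c) p q"
    by (simp add: hom_diff[OF A.Zset_in_comp[OF z] A.Zset_in_comp[OF z']])
  then have "coset_of B (Suc c) p q (f z) = coset_of B (Suc c) p q (f z')"
    by (simp only: B.coset_of_eq_iff)
  then show ?thesis
    unfolding Emap_def z'_def[symmetric] by (rule sym)
qed

lemma inj_on_Emap_iff:
  "inj_on (Emap A B f (Suc c) p q) (Eset A (Suc c) p q) \<longleftrightarrow>
     (\<forall>z\<in>Zset A (Suc c) p q. f z \<in> Bset B (Suc c) p q \<longrightarrow> z \<in> Bset A (Suc c) p q)"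
  (is "?inj \<longleftrightarrow> ?ker")
proof
  assume inj: ?inj
  show ?ker
  proof (intro ballI impI)
    fix z assume z: "z \<in> Zset A (Suc c) p q" and fz: "f z \<in> Bset B (Suc c) p q"
    have "Emap A B f (Suc c) p q (coset_of A (Suc c) p q z) = Emap A B f (Suc c) p q (coset_of A (Suc c) p q 0)"
      using fz by (simp add: Emap_coset[OF z] Emap_coset[OF A.Zset_zero] B.coset_of_eq_iff)
    then have "coset_of A (Suc c) p q z = coset_of A (Suc c) p q 0"
      using z A.Zset_zero by (intro inj_onD[OF inj]) (auto simp: Eset_def)
    then show "z \<in> Bset A (Suc c) p q"
      by (simp add: A.coset_of_eq_iff)
  qed
next
  assume ker: ?ker
  show ?inj
  proof (rule inj_onI)
    fix X Y assume "X \<in> Eset A (Suc c) p q" "Y \<in> Eset A (Suc c) p q"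
      and eq: "Emap A B f (Suc c) p q X = Emap A B f (Suc c) p q Y"
    then obtain z z' where z: "z \<in> Zset A (Suc c) p q" "X = coset_of A (Suc c) p q z"
      and z': "z' \<in> Zset A (Suc c) p q" "Y = coset_of A (Suc c) p q z'"
      by (auto simp: Eset_def)
    have "f (z - z') \<in> Bset B (Suc c) p q"
      using eq by (simp add: z z' Emap_coset B.coset_of_eq_iff hom_diff[OF A.Zset_in_comp[OF z(1)] A.Zset_in_comp[OF z'(1)]])
    then have "z - z' \<in> Bset A (Suc c) p q"
      using ker A.Zset_diff[OF z(1) z'(1)] by blast
    then show "X = Y"
      by (simp add: z z' A.coset_of_eq_iff)
  qed
qed

lemma Emap_image_eq_iff:
  "Emap A B f (Suc c) p q ` Eset A (Suc c) p q = Eset B (Suc c) p q \<longleftrightarrow>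
     (\<forall>w\<in>Zset B (Suc c) p q. \<exists>z\<in>Zset A (Suc c) p q. w - f z \<in> Bset B (Suc c) p q)"
proof -
  have image: "Emap A B f (Suc c) p q ` Eset A (Suc c) p q = coset_of B (Suc c) p q ` f ` Zset A (Suc c) p q"
    by (auto simp: Eset_def Emap_coset image_image)
  have "Eset B (Suc c) p q \<subseteq> coset_of B (Suc c) p q ` f ` Zset A (Suc c) p q \<longleftrightarrow>
      (\<forall>w\<in>Zset B (Suc c) p q. \<exists>z\<in>Zset A (Suc c) p q. w - f z \<in> Bset B (Suc c) p q)"
  proof -
    have "coset_of B (Suc c) p q w \<in> coset_of B (Suc c) p q ` f ` Zset A (Suc c) p q \<longleftrightarrow>
        (\<exists>z\<in>Zset A (Suc c) p q. w - f z \<in> Bset B (Suc c) p q)" for w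
      by (auto simp: B.coset_of_eq_iff)
    then show ?thesis
      unfolding Eset_def image_subset_iff by blast
  qed
  moreover have "coset_of B (Suc c) p q ` f ` Zset A (Suc c) p q \<subseteq> Eset B (Suc c) p q"
    using hom_Zset by (auto simp: Eset_def)
  ultimately show ?thesis
    unfolding image by blast
qed

lemma E_qiso_iff: "E_qiso A B f c \<longleftrightarrow> E_injective A B f c \<and> E_surjective A B f c"
  unfolding E_qiso_def bij_betw_def inj_on_Emap_iff Emap_image_eq_iff E_injective_def E_surjective_def
  by blast

lemma J_inj_iff_zw_lift: "J_inj m A B f \<longleftrightarrow> zw_lift A B f m"
proof -
  have "Hom zero_pres A = UNIV" "gens (zero_pres :: ('r, nat) pres) = {}"
    by (auto simp: Hom_def zero_pres_def)
  moreover have "gens (ZWp m p q :: ('r, nat) pres) = {..<max 1 m}" for p q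
    by (simp add: ZWp_def)
  ultimately show ?thesis
    unfolding J_inj_def rlp_def zw_lift_def by (simp add: Bex_def Ball_def A.Hom_ZWp_iff B.Hom_ZWp_iff)
qed

lemma boundary_lift_if_I_inj:
  assumes I: "I_inj c A B f"
  shows "boundary_lift A B f c"
  unfolding boundary_lift_def
proof (intro allI impI)
  fix p q a0 b
  assume "a0 \<in> Zset A (Suc c) p q" and b: "bnd_witness B c (p + int c) (q + int c - 1) b"
    and fa0: "f a0 = tdiff B b c"
  then obtain a where a: "zw_elt A (Suc c) p q a" and a0: "a 0 = a0"
    by (auto simp: Zset_eq_zw_elt)
  let ?\<beta> = "bw_assign B c (\<lambda>k. f (a k)) b"
  have fa: "zw_elt B (Suc c) p q (\<lambda>k. f (a k))"
    by (rule hom_zw_elt[OF a])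
  have fa0': "f (a 0) = tdiff B b c"
    using a0 fa0 by simp
  have "a \<in> Hom (ZWp (Suc c) p q) A"
    using a by (simp add: A.Hom_ZWp_iff)
  moreover have "?\<beta> \<in> Hom (BWp (Suc c) p (q - 1)) B"
    using B.Hom_bw_assign[OF fa b] fa0' by simp
  moreover have "\<forall>g\<in>gens (ZWp (Suc c) p q :: ('r, nat) pres). f (a g) = evalx B ?\<beta> (iota (Suc c) g)"
    using B.evalx_iota_bw_assign[OF fa b] fa0' by (simp add: ZWp_def)
  ultimately have "\<exists>\<gamma>\<in>Hom (BWp (Suc c) p (q - 1)) A. (\<forall>j\<in>gens (ZWp (Suc c) p q :: ('r, nat) pres). evalx A \<gamma> (iota (Suc c) j) = a j)
      \<and> (\<forall>h\<in>gens (BWp (Suc c) p (q - 1) :: ('r, bwgen) pres). f (\<gamma> h) = ?\<beta> h)"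
    using I unfolding I_inj_def rlp_def by blast
  then obtain \<gamma> where \<gamma>: "\<gamma> \<in> Hom (BWp (Suc c) p (q - 1)) A"
    and \<gamma>_a0: "evalx A \<gamma> (iota (Suc c) 0) = a0"
    and \<gamma>_b: "\<forall>h\<in>gens (BWp (Suc c) p (q - 1) :: ('r, bwgen) pres). f (\<gamma> h) = ?\<beta> h"
    using a0 by (auto simp: ZWp_def)
  show "\<exists>b'. bnd_witness A c (p + int c) (q + int c - 1) b' \<and> (\<forall>k\<le>c. f (b' k) = b k) \<and> tdiff A b' c = a0"
  proof (intro exI conjI allI impI)
    show "bnd_witness A c (p + int c) (q + int c - 1) (bw_seq c \<gamma>)"
      using \<gamma> by (simp add: A.Hom_BWp_iff)
    show "f (bw_seq c \<gamma> k) = b k" if "k \<le> c" for k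
      using \<gamma>_b that by (auto simp: bw_seq_def BWp_def bw_assign_def)
    show "tdiff A (bw_seq c \<gamma>) c = a0"
      using \<gamma>_a0 A.evalx_iota[OF \<gamma>, of 0] by (simp add: bnd_seq_0)
  qed
qed

lemma I_inj_if_boundary_lift:
  assumes S: "boundary_lift A B f c"
  shows "I_inj c A B f"
  unfolding I_inj_def rlp_def
proof (intro allI impI)
  fix p q \<alpha> \<beta>
  assume "\<alpha> \<in> Hom (ZWp (Suc c) p q) A" and \<beta>: "\<beta> \<in> Hom (BWp (Suc c) p (q - 1)) B"
    and compat: "\<forall>g\<in>gens (ZWp (Suc c) p q :: ('r, nat) pres). f (\<alpha> g) = evalx B \<beta> (iota (Suc c) g)"
  then have a: "zw_elt A (Suc c) p q \<alpha>"
    by (simp add: A.Hom_ZWp_iff)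
  have f\<alpha>: "f (\<alpha> j) = bnd_seq B c (bw_seq c \<beta>) j + (if j = 0 then 0 else \<beta> (Cg (j - 1)))" if "j < Suc c" for j
    using compat that B.evalx_iota[OF \<beta> that] by (simp add: ZWp_def)
  obtain b where b: "bnd_witness A c (p + int c) (q + int c - 1) b"
    and fb: "\<forall>k\<le>c. f (b k) = bw_seq c \<beta> k" and \<alpha>0: "tdiff A b c = \<alpha> 0"
    using S a \<beta> f\<alpha>[of 0] unfolding boundary_lift_def
    by (force simp: Zset_eq_zw_elt B.Hom_BWp_iff bnd_seq_0)
  let ?\<gamma> = "bw_assign A c \<alpha> b"
  have "f (?\<gamma> h) = \<beta> h" if "h \<in> gens (BWp (Suc c) p (q - 1) :: ('r, bwgen) pres)" for h
  proof -
    have b_in: "diag_seq A (Suc c) (p + int c) (q + int c - 1) b"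
      using b by (simp add: bnd_witness_def)
    have "f (bnd_seq A c b j) = bnd_seq B c (bw_seq c \<beta>) j" for j
      using fb by (simp add: hom_bnd_seq[OF b_in] cong: bnd_seq_cong)
    moreover have "\<alpha> (Suc k) \<in> comp A (p - int (Suc k)) (q - int (Suc k))" if "k < c" for k
      using a that by (intro diag_seqD[of A "Suc c"]) (simp_all add: zw_elt_def)
    ultimately have "f (?\<gamma> (Cg k)) = \<beta> (Cg k)" if "k < c" for k
      using that f\<alpha>[of "Suc k"] by (simp add: bw_assign_def hom_diff[OF _ A.bnd_seq_in_comp[OF b_in]])
    with that fb show ?thesis
      by (auto simp: BWp_def bw_assign_def bw_seq_def)
  qed
  then show "\<exists>\<gamma>\<in>Hom (BWp (Suc c) p (q - 1)) A.
      (\<forall>g\<in>gens (ZWp (Suc c) p q :: ('r, nat) pres). evalx A \<gamma> (iota (Suc c) g) = \<alpha> g)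
      \<and> (\<forall>h\<in>gens (BWp (Suc c) p (q - 1) :: ('r, bwgen) pres). f (\<gamma> h) = \<beta> h)"
    using A.Hom_bw_assign[OF a b \<alpha>0[symmetric]] A.evalx_iota_bw_assign[OF a b \<alpha>0[symmetric]]
    by (auto simp: ZWp_def)
qed

lemma zw_lift_Suc_if_boundary_lift:
  assumes S: "boundary_lift A B f c"
  shows "zw_lift A B f (Suc c)"
  unfolding zw_lift_def
proof (intro allI impI)
  fix p q x assume "zw_elt B (Suc c) p q x"
  then have x: "bnd_witness B c p q x" "f 0 = tdiff B x c"
    by (simp_all add: zw_elt_Suc_iff)
  obtain y where "bnd_witness A c p q y" "\<forall>k\<le>c. f (y k) = x k" "tdiff A y c = 0"
    using boundary_liftD[OF S A.Zset_zero x] by blast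
  then show "\<exists>y. zw_elt A (Suc c) p q y \<and> (\<forall>j<max 1 (Suc c). f (y j) = x j)"
    by (auto simp: zw_elt_Suc_iff less_Suc_eq_le)
qed

lemma bnd_witness_lift_if_boundary_lift:
  assumes S: "boundary_lift A B f c" and W: "zw_lift A B f (Suc c)"
  shows "bnd_witness_lift A B f c"
  unfolding bnd_witness_lift_def
proof (intro allI impI)
  fix p q b assume b: "bnd_witness B c p q b"
  then have "zw_elt B (Suc c) (p - int c) (q + 1 - int c) (bnd_seq B c b)"
    by (intro B.zw_elt_bnd_seq) simp
  then obtain y where y: "zw_elt A (Suc c) (p - int c) (q + 1 - int c) y" "\<forall>j<Suc c. f (y j) = bnd_seq B c b j"
    using W unfolding zw_lift_def by fastforce
  then have "y 0 \<in> Zset A (Suc c) (p - int c) (q + 1 - int c)" "f (y 0) = tdiff B b c"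
    by (auto simp: Zset_eq_zw_elt bnd_seq_0)
  then show "\<exists>b'. bnd_witness A c p q b' \<and> (\<forall>k\<le>c. f (b' k) = b k)"
    using boundary_liftD[OF S _ b] by blast
qed

lemma zw_lift_0_if_bnd_witness_lift:
  assumes W: "bnd_witness_lift A B f c"
  shows "zw_lift A B f 0"
  unfolding zw_lift_def
proof (intro allI impI)
  fix p q x assume "zw_elt B 0 p q x"
  then have x0: "x 0 \<in> comp B p q"
    by (rule zw_elt_in_comp)
  let ?b = "\<lambda>k. if k = c then x 0 else 0"
  have "tdiff B ?b l = tdiff B (\<lambda>k. 0) l" if "l < c" for l
    using that by (intro tdiff_cong) auto
  then have "bnd_witness B c (p + int c) (q + int c) ?b"
    using x0 by (auto simp: bnd_witness_def diag_seq_def)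
  then obtain b' where b': "bnd_witness A c (p + int c) (q + int c) b'" "\<forall>k\<le>c. f (b' k) = ?b k"
    using W unfolding bnd_witness_lift_def by blast
  then have "b' c \<in> comp A p q"
    using diag_seqD[of A "Suc c" "p + int c" "q + int c" b' c] by (simp add: bnd_witness_def)
  with b'(2) show "\<exists>y. zw_elt A 0 p q y \<and> (\<forall>j<max 1 0. f (y j) = x j)"
    by (intro exI[of _ "\<lambda>k. b' c"]) (simp add: zw_elt_def diag_seq_def)
qed

lemma zw_lift_if_bnd_witness_lift:
  assumes W: "bnd_witness_lift A B f c"
  shows "zw_lift A B f c"
proof (cases "c = 0")
  case True
  with zw_lift_0_if_bnd_witness_lift[OF W] show ?thesis by simp
next
  case False
  show ?thesis
    unfolding zw_lift_def
  proof (intro allI impI)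
    fix p q x assume x: "zw_elt B c p q x"
    let ?b = "\<lambda>k. if k < c then x k else 0"
    have "bnd_witness B c p q ?b"
      using x False by (auto simp: zw_elt_pos_iff bnd_witness_def diag_seq_def cong: tdiff_cong)
    then obtain b' where "bnd_witness A c p q b'" "\<forall>k\<le>c. f (b' k) = ?b k"
      using W unfolding bnd_witness_lift_def by blast
    with False show "\<exists>y. zw_elt A c p q y \<and> (\<forall>j<max 1 c. f (y j) = x j)"
      by (intro exI[of _ b']) (auto simp: zw_elt_pos_iff bnd_witness_def intro: diag_seq_mono)
  qed
qed

lemma bnd_witness_lift_if_zw_lift:
  assumes J0: "zw_lift A B f 0" and J: "zw_lift A B f c"
  shows "bnd_witness_lift A B f c"
  unfolding bnd_witness_lift_def
proof (intro allI impI)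
  fix p q b assume b: "bnd_witness B c p q b"
  have "b c \<in> comp B (p - int c) (q - int c)"
    using b diag_seqD[of B "Suc c" p q b c] by (simp add: bnd_witness_def)
  then have "zw_elt B 0 (p - int c) (q - int c) (\<lambda>k. b c)"
    by (simp add: zw_elt_def diag_seq_def)
  then obtain e where e: "zw_elt A 0 (p - int c) (q - int c) e" "f (e 0) = b c"
    using J0 unfolding zw_lift_def by fastforce
  have e0: "e 0 \<in> comp A (p - int c) (q - int c)"
    by (rule zw_elt_in_comp[OF e(1)])
  show "\<exists>b'. bnd_witness A c p q b' \<and> (\<forall>k\<le>c. f (b' k) = b k)"
  proof (cases "c = 0")
    case True
    with e0 e(2) show ?thesis
      by (intro exI[of _ "\<lambda>k. e 0"]) (simp add: bnd_witness_def diag_seq_def)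
  next
    case False
    have "zw_elt B c p q b"
      using b False by (auto simp: zw_elt_pos_iff bnd_witness_def intro: diag_seq_mono)
    then obtain y where y: "zw_elt A c p q y" "\<forall>j<c. f (y j) = b j"
      using J False unfolding zw_lift_def by (fastforce simp: max_absorb2)
    let ?b' = "\<lambda>k. if k < c then y k else e 0"
    have "bnd_witness A c p q ?b'"
      using y(1) e0 False by (auto simp: zw_elt_pos_iff bnd_witness_def diag_seq_def less_Suc_eq cong: tdiff_cong)
    moreover have "\<forall>k\<le>c. f (?b' k) = b k"
      using y(2) e(2) by (auto simp: le_less)
    ultimately show ?thesis
      by blast
  qed
qed

lemma E_injective_if_boundary_lift:
  assumes S: "boundary_lift A B f c"
  shows "E_injective A B f c"
  unfolding E_injective_def
proof (intro allI ballI impI)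
  fix p q z assume "z \<in> Zset A (Suc c) p q" "f z \<in> Bset B (Suc c) p q"
  then show "z \<in> Bset A (Suc c) p q"
    using S unfolding boundary_lift_def Bset_eq_tdiff by blast
qed

lemma E_surjective_if_zw_lift:
  assumes W: "zw_lift A B f (Suc c)"
  shows "E_surjective A B f c"
  unfolding E_surjective_def
proof (intro allI ballI)
  fix p q w assume "w \<in> Zset B (Suc c) p q"
  then obtain x where x: "zw_elt B (Suc c) p q x" "x 0 = w"
    by (auto simp: Zset_eq_zw_elt)
  then obtain y where "zw_elt A (Suc c) p q y" "f (y 0) = w"
    using W unfolding zw_lift_def by fastforce
  then show "\<exists>z\<in>Zset A (Suc c) p q. w - f z \<in> Bset B (Suc c) p q"
    using B.Bset_zero by (auto simp: Zset_eq_zw_elt)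
qed

lemma zw_lift_Suc_initial:
  assumes Es: "E_surjective A B f c" and W: "bnd_witness_lift A B f c"
    and v: "zw_elt B (Suc c) p q v"
  obtains u where "zw_elt A (Suc c) p q u" "f (u 0) = v 0"
proof -
  have "v 0 \<in> Zset B (Suc c) p q"
    using v by (auto simp: Zset_eq_zw_elt)
  then obtain z where z: "z \<in> Zset A (Suc c) p q" and "v 0 - f z \<in> Bset B (Suc c) p q"
    using Es unfolding E_surjective_def by blast
  then obtain b where b: "bnd_witness B c (p + int c) (q + int c - 1) b" "v 0 - f z = tdiff B b c"
    by (auto simp: Bset_eq_tdiff)
  obtain a where a: "zw_elt A (Suc c) p q a" "a 0 = z"
    using z by (auto simp: Zset_eq_zw_elt)
  obtain b' where b': "bnd_witness A c (p + int c) (q + int c - 1) b'" "\<forall>k\<le>c. f (b' k) = b k"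
    using W b(1) unfolding bnd_witness_lift_def by blast
  have b'_in: "diag_seq A (Suc c) (p + int c) (q + int c - 1) b'"
    using b'(1) by (simp add: bnd_witness_def)
  let ?u = "\<lambda>k. a k + bnd_seq A c b' k"
  have "zw_elt A (Suc c) p q ?u"
    by (rule A.zw_elt_add[OF a(1) A.zw_elt_bnd_seq[OF b'(1)]])
  moreover have "f (?u 0) = v 0"
  proof -
    have b'c: "tdiff A b' c \<in> comp A p q"
      using A.bnd_seq_in_comp[OF b'_in, of 0] by (simp add: bnd_seq_0)
    have "f (tdiff A b' c) = tdiff B b c"
      using b'(2) by (simp add: hom_tdiff[OF b'_in] cong: tdiff_cong)
    moreover have "z \<in> comp A p q"
      using zw_elt_in_comp[OF a(1)] a(2) by simp
    ultimately show ?thesis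
      using a(2) b(2)[symmetric] by (simp add: bnd_seq_0 hom_add[OF _ b'c])
  qed
  ultimately show ?thesis
    using that by blast
qed

lemma zw_lift_Suc_if_E_surjective:
  assumes Es: "E_surjective A B f c" and W: "bnd_witness_lift A B f c" and J: "zw_lift A B f c"
  shows "zw_lift A B f (Suc c)"
  unfolding zw_lift_def
proof (intro allI impI)
  fix p q v assume v: "zw_elt B (Suc c) p q v"
  obtain u where u: "zw_elt A (Suc c) p q u" "f (u 0) = v 0"
    using zw_lift_Suc_initial[OF Es W v] by blast
  let ?x = "\<lambda>k. v k - f (u k)"
  have x: "zw_elt B (Suc c) p q ?x" "?x 0 = 0"
    using B.zw_elt_diff[OF v hom_zw_elt[OF u(1)]] u(2) by simp_all
  show "\<exists>y. zw_elt A (Suc c) p q y \<and> (\<forall>j<max 1 (Suc c). f (y j) = v j)"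
  proof (cases "c = 0")
    case True
    with u show ?thesis by auto
  next
    case False
    then have "zw_elt B c (p - 1) (q - 1) (\<lambda>k. ?x (Suc k))"
      using B.zw_elt_shift[OF x] by (simp add: zw_elt_pos_iff)
    then obtain w where w: "zw_elt A c (p - 1) (q - 1) w" "\<forall>j<c. f (w j) = ?x (Suc j)"
      using J False unfolding zw_lift_def by (fastforce simp: max_absorb2)
    let ?w = "\<lambda>k. if k = 0 then 0 else w (k - 1)"
    have w': "zw_elt A (Suc c) p q ?w"
      using A.zw_elt_unshift[OF w(1)] False by simp
    have "f (u j + ?w j) = v j" if "j < Suc c" for j
    proof -
      have "u j \<in> comp A (p - int j) (q - int j)" "?w j \<in> comp A (p - int j) (q - int j)"
        using u(1) w' that diag_seqD[of A "Suc c" p q u j] diag_seqD[of A "Suc c" p q ?w j]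
        by (simp_all only: zw_elt_def max_Suc_Suc max_0L One_nat_def)
      then have "f (u j + ?w j) = f (u j) + f (?w j)"
        by (rule hom_add)
      also have "f (?w j) = ?x j"
        using w(2) x(2) that by (cases j) auto
      finally show ?thesis by simp
    qed
    then show ?thesis
      using A.zw_elt_add[OF u(1) w'] by auto
  qed
qed

lemma boundary_lift_if_E_injective:
  assumes Ei: "E_injective A B f c" and W: "zw_lift A B f (Suc c)"
  shows "boundary_lift A B f c"
  unfolding boundary_lift_def
proof (intro allI impI)
  fix p q a0 b
  assume a0: "a0 \<in> Zset A (Suc c) p q" and b: "bnd_witness B c (p + int c) (q + int c - 1) b"
    and fa0: "f a0 = tdiff B b c"
  have "a0 \<in> Bset A (Suc c) p q"
    using Ei a0 b fa0 unfolding E_injective_def Bset_eq_tdiff by blast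
  then obtain u where u: "bnd_witness A c (p + int c) (q + int c - 1) u" "a0 = tdiff A u c"
    by (auto simp: Bset_eq_tdiff)
  have u_in: "diag_seq A (Suc c) (p + int c) (q + int c - 1) u"
    using u(1) by (simp add: bnd_witness_def)
  let ?v = "\<lambda>k. b k - f (u k)"
  have "bnd_witness B c (p + int c) (q + int c - 1) ?v"
    by (rule B.bnd_witness_diff[OF b hom_bnd_witness[OF u(1)]])
  moreover have "tdiff B ?v c = 0"
    using B.tdiff_bnd_witness_diff[OF b hom_bnd_witness[OF u(1)]] hom_tdiff[OF u_in] u(2) fa0 by simp
  ultimately have "zw_elt B (Suc c) (p + int c) (q + int c - 1) ?v"
    by (simp add: zw_elt_Suc_iff)
  then obtain v' where v': "zw_elt A (Suc c) (p + int c) (q + int c - 1) v'" "\<forall>j<Suc c. f (v' j) = ?v j"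
    using W unfolding zw_lift_def by fastforce
  then have v'_bw: "bnd_witness A c (p + int c) (q + int c - 1) v'" and "tdiff A v' c = 0"
    by (simp_all add: zw_elt_Suc_iff)
  show "\<exists>b'. bnd_witness A c (p + int c) (q + int c - 1) b' \<and> (\<forall>k\<le>c. f (b' k) = b k) \<and> tdiff A b' c = a0"
  proof (intro exI conjI allI impI)
    show "bnd_witness A c (p + int c) (q + int c - 1) (\<lambda>k. u k + v' k)"
      by (rule A.bnd_witness_add[OF u(1) v'_bw])
    show "f (u k + v' k) = b k" if "k \<le> c" for k
    proof -
      have "u k \<in> comp A (p + int c - int k) (q + int c - 1 - int k)"
        "v' k \<in> comp A (p + int c - int k) (q + int c - 1 - int k)"
        using that diag_seqD[OF u_in, of k] diag_seqD[of A "Suc c" "p + int c" "q + int c - 1" v' k] v'_bw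
        by (simp_all add: bnd_witness_def)
      then show ?thesis
        using that v'(2) by (simp add: hom_add)
    qed
    show "tdiff A (\<lambda>k. u k + v' k) c = a0"
      using A.tdiff_bnd_witness_add[OF u(1) v'_bw] u(2) \<open>tdiff A v' c = 0\<close> by simp
  qed
qed

end

theorem mainTheorem7:
  fixes n :: enat and r :: nat
    and A :: "('r::comm_ring_1, 'a::ab_group_add) mcx"
    and B :: "('r, 'b::ab_group_add) mcx"
    and f :: "'a \<Rightarrow> 'b"
  assumes "2 \<le> n"
    and "is_mc n A" and "is_mc n B" and "mc_hom A B f"
  shows "I_inj r A B f \<longleftrightarrow> (E_qiso A B f r \<and> J_inj 0 A B f \<and> J_inj r A B f)"
proof -
  interpret mc_morphism n n A B f
    using assms(2-4) by (simp add: mc_morphism_def multicomplex_def mc_morphism_axioms_def)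
  have "I_inj r A B f \<longleftrightarrow> boundary_lift A B f r"
    using I_inj_if_boundary_lift boundary_lift_if_I_inj by blast
  also have "\<dots> \<longleftrightarrow> E_injective A B f r \<and> zw_lift A B f (Suc r)"
    using E_injective_if_boundary_lift zw_lift_Suc_if_boundary_lift boundary_lift_if_E_injective by blast
  also have "\<dots> \<longleftrightarrow> E_injective A B f r \<and> E_surjective A B f r \<and> bnd_witness_lift A B f r \<and> zw_lift A B f r"
    using E_surjective_if_zw_lift zw_lift_Suc_if_E_surjective zw_lift_if_bnd_witness_lift
      bnd_witness_lift_if_boundary_lift boundary_lift_if_E_injective by blast
  also have "\<dots> \<longleftrightarrow> E_qiso A B f r \<and> zw_lift A B f 0 \<and> zw_lift A B f r"
    using E_qiso_iff zw_lift_0_if_bnd_witness_lift zw_lift_if_bnd_witness_lift bnd_witness_lift_if_zw_lift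
    by blast
  finally show ?thesis
    by (simp add: J_inj_iff_zw_lift)
qed

end
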